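(* Let $\Gamma$ be a Neumaier graph with parameters $(n,k,\lambda;a,c)$. Then the number of edges of $\Gamma$ is at least $$k(k-\lambda)+(k-c+1)(a-1)+\frac{(k-c+1)(\lambda-a+1)}{2}+\frac{(c-1)(c-2)}{2}.$$
   Context: All graphs are finite, simple, undirected and connected. A graph is edge-regular with parameters $(n,k,\lambda)$ if it has $n$ vertices, is $k$-regular, and any two adjacent vertices have exactly $\lambda$ common neighbours. A clique $C$ is a regular clique with nexus $a$ if every vertex not in $C$ has exactly $a$ neighbours in $C$. A Neumaier graph is a non-complete edge-regular graph containing a regular clique; it has parameters $(n,k,\lambda;a,c)$ if it is edge-regular with parameters $(n,k,\lambda)$ and contains a regular clique of size $c$ with nexus $a$. *)

theory Defs
  imports Complex_Main
begin

definition simple_graph :: "'a set \<Rightarrow> ('a \<Rightarrow> 'a \<Rightarrow> bool) \<Rightarrow> bool" where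
  "simple_graph V E \<longleftrightarrow> finite V \<and> (\<forall>u v. E u v \<longrightarrow> u \<in> V \<and> v \<in> V)
     \<and> (\<forall>u v. E u v \<longrightarrow> E v u) \<and> (\<forall>v. \<not> E v v)"

definition connected_graph :: "'a set \<Rightarrow> ('a \<Rightarrow> 'a \<Rightarrow> bool) \<Rightarrow> bool" where
  "connected_graph V E \<longleftrightarrow> V \<noteq> {} \<and> (\<forall>u\<in>V. \<forall>v\<in>V. E\<^sup>*\<^sup>* u v)"

definition neighbours :: "'a set \<Rightarrow> ('a \<Rightarrow> 'a \<Rightarrow> bool) \<Rightarrow> 'a \<Rightarrow> 'a set" where
  "neighbours V E v = {u \<in> V. E v u}"

definition edges :: "('a \<Rightarrow> 'a \<Rightarrow> bool) \<Rightarrow> 'a set set" where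
  "edges E = {{u, v} | u v. E u v}"

definition edge_regular :: "'a set \<Rightarrow> ('a \<Rightarrow> 'a \<Rightarrow> bool) \<Rightarrow> nat \<Rightarrow> nat \<Rightarrow> nat \<Rightarrow> bool" where
  "edge_regular V E n k lam \<longleftrightarrow> simple_graph V E \<and> card V = n
     \<and> (\<forall>v\<in>V. card (neighbours V E v) = k)
     \<and> (\<forall>u v. E u v \<longrightarrow> card (neighbours V E u \<inter> neighbours V E v) = lam)"

definition is_clique :: "'a set \<Rightarrow> ('a \<Rightarrow> 'a \<Rightarrow> bool) \<Rightarrow> 'a set \<Rightarrow> bool" where
  "is_clique V E C \<longleftrightarrow> C \<noteq> {} \<and> C \<subseteq> V \<and> (\<forall>u\<in>C. \<forall>v\<in>C. u \<noteq> v \<longrightarrow> E u v)"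

definition regular_clique :: "'a set \<Rightarrow> ('a \<Rightarrow> 'a \<Rightarrow> bool) \<Rightarrow> 'a set \<Rightarrow> nat \<Rightarrow> bool" where
  "regular_clique V E C a \<longleftrightarrow> is_clique V E C
     \<and> (\<forall>v \<in> V - C. card (neighbours V E v \<inter> C) = a)"

definition complete_graph :: "'a set \<Rightarrow> ('a \<Rightarrow> 'a \<Rightarrow> bool) \<Rightarrow> bool" where
  "complete_graph V E \<longleftrightarrow> (\<forall>u\<in>V. \<forall>v\<in>V. u \<noteq> v \<longrightarrow> E u v)"

definition neumaier_graph ::
  "'a set \<Rightarrow> ('a \<Rightarrow> 'a \<Rightarrow> bool) \<Rightarrow> nat \<Rightarrow> nat \<Rightarrow> nat \<Rightarrow> nat \<Rightarrow> nat \<Rightarrow> bool" where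
  "neumaier_graph V E n k lam a c \<longleftrightarrow> edge_regular V E n k lam \<and> connected_graph V E
     \<and> \<not> complete_graph V E \<and> (\<exists>C. regular_clique V E C a \<and> card C = c)"

end

theory Submission
  imports Defs
begin

text \<open>Fix a vertex \<open>x\<close> of a regular clique \<open>C\<close>. Every neighbour of \<open>x\<close> has \<open>k\<close> neighbours,
  and exactly \<open>k - \<lambda>\<close> of them lie outside \<open>N(x)\<close>; counting these arcs gives
  \<open>2|E| \<ge> k\<^sup>2 + k(k - \<lambda>)\<close>. Counting the edges between \<open>C - {x}\<close> and \<open>N(x) - C\<close> in two ways
  gives \<open>(k - c + 1)(a - 1) = (c - 1)(\<lambda> - c + 2)\<close>, and with this identity the claimed bound
  is exactly \<open>k(2k - \<lambda>)/2\<close>.\<close>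

lemma card_darts_le_twice_card_edges: "card {(u, v). E u v} \<le> 2 * card (edges E)"
proof (cases "finite {(u, v). E u v}")
  case True
  have finite_edges: "finite (edges E)"
  proof -
    have "edges E = (\<lambda>(u, v). {u, v}) ` {(u, v). E u v}" unfolding edges_def by auto
    then show ?thesis using True by simp
  qed
  have "{(u, v). E u v} = (\<Union>e\<in>edges E. {(u, v). E u v \<and> {u, v} = e})"
    unfolding edges_def by auto
  then have "card {(u, v). E u v} \<le> (\<Sum>e\<in>edges E. card {(u, v). E u v \<and> {u, v} = e})"
    using card_UN_le[OF finite_edges] by simp
  also have "\<dots> \<le> card (edges E) * 2"
  proof -
    have "card {(u, v). E u v \<and> {u, v} = e} \<le> 2" if "e \<in> edges E" for e
    proof -
      obtain a b where "e = {a, b}" using \<open>e \<in> edges E\<close> unfolding edges_def by auto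
      then have "{(u, v). E u v \<and> {u, v} = e} \<subseteq> {(a, b), (b, a)}"
        by (auto simp: doubleton_eq_iff)
      then have "card {(u, v). E u v \<and> {u, v} = e} \<le> card {(a, b), (b, a)}"
        by (intro card_mono) simp_all
      also have "\<dots> \<le> 2"
        by (rule card_insert_le_m1) simp_all
      finally show ?thesis .
    qed
    then show ?thesis using sum_bounded_above[of "edges E" _ "2::nat"] by simp
  qed
  finally show ?thesis by simp
qed simp

lemma card_Sigma_const:
  assumes "finite A" and "\<And>x. x \<in> A \<Longrightarrow> finite (B x)" and "\<And>x. x \<in> A \<Longrightarrow> card (B x) = m"
  shows "card (Sigma A B) = card A * m"
  using assms by simp

lemma double_counting_const:
  assumes "finite A" and "finite B"
    and "\<And>x. x \<in> A \<Longrightarrow> card {y \<in> B. R x y} = r"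
    and "\<And>y. y \<in> B \<Longrightarrow> card {x \<in> A. R x y} = s"
  shows "card A * r = card B * s"
proof -
  have "Sigma A (\<lambda>x. {y \<in> B. R x y}) = prod.swap ` Sigma B (\<lambda>y. {x \<in> A. R x y})" by auto
  then have "card (Sigma A (\<lambda>x. {y \<in> B. R x y})) = card (Sigma B (\<lambda>y. {x \<in> A. R x y}))"
    by (simp add: card_image)
  then show ?thesis using assms by simp
qed

locale edge_regular_graph =
  fixes V :: "'a set" and E :: "'a \<Rightarrow> 'a \<Rightarrow> bool" and n k lam :: nat
  assumes edge_regular: "edge_regular V E n k lam"
begin

abbreviation nbh :: "'a \<Rightarrow> 'a set" where
  "nbh v \<equiv> neighbours V E v"

lemma finite_vertices: "finite V"
  using edge_regular by (simp add: edge_regular_def simple_graph_def)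

lemma adj_in_vertices: "E u v \<Longrightarrow> u \<in> V \<and> v \<in> V"
  using edge_regular by (simp add: edge_regular_def simple_graph_def)

lemma adj_sym: "E u v \<Longrightarrow> E v u"
  using edge_regular by (simp add: edge_regular_def simple_graph_def)

lemma adj_irrefl: "\<not> E v v"
  using edge_regular by (simp add: edge_regular_def simple_graph_def)

lemma card_nbh: "v \<in> V \<Longrightarrow> card (nbh v) = k"
  using edge_regular by (simp add: edge_regular_def)

lemma card_common_nbh: "E u v \<Longrightarrow> card (nbh u \<inter> nbh v) = lam"
  using edge_regular by (simp add: edge_regular_def)

lemma mem_nbh_iff: "u \<in> nbh v \<longleftrightarrow> E v u"
  using adj_in_vertices by (auto simp: neighbours_def)

lemma finite_nbh: "finite (nbh v)"
  using finite_vertices by (simp add: neighbours_def)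

lemma lam_le_degree: "E u v \<Longrightarrow> lam \<le> k"
  using card_common_nbh[of u v] card_nbh[of u] adj_in_vertices[of u v]
    card_mono[OF finite_nbh Int_lower1] by metis

lemma darts_lower_bound:
  assumes "x \<in> V"
  shows "k * k + k * (k - lam) \<le> card {(u, v). E u v}"
proof -
  define inner where "inner = Sigma (nbh x) nbh"
  define entering where "entering = prod.swap ` Sigma (nbh x) (\<lambda>u. nbh u - nbh x)"
  have "card inner = k * k"
    unfolding inner_def using assms finite_nbh card_nbh adj_in_vertices mem_nbh_iff
    by (subst card_Sigma_const[where m = k]) auto
  moreover have "card entering = k * (k - lam)"
  proof -
    have "card (nbh u - nbh x) = k - lam" if "u \<in> nbh x" for u
    proof -
      have "E x u" using that mem_nbh_iff by simp
      then have "card (nbh u - nbh x) = card (nbh u) - card (nbh x \<inter> nbh u)"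
        by (simp add: card_Diff_subset_Int finite_nbh Int_commute)
      with \<open>E x u\<close> show ?thesis using card_nbh card_common_nbh adj_in_vertices by simp
    qed
    then show ?thesis
      unfolding entering_def using assms card_nbh finite_nbh
      by (simp add: card_image card_Sigma_const[where m = "k - lam"])
  qed
  moreover have "inner \<inter> entering = {}"
    unfolding inner_def entering_def by auto
  moreover have "inner \<union> entering \<subseteq> {(u, v). E u v}"
    unfolding inner_def entering_def using mem_nbh_iff adj_sym by auto
  moreover have "finite {(u, v). E u v}"
    by (rule finite_subset[of _ "V \<times> V"]) (use finite_vertices adj_in_vertices in auto)
  ultimately show ?thesis
    by (metis card_Un_disjoint card_mono finite_Un rev_finite_subset)
qed

lemma twice_card_edges_ge:
  assumes "V \<noteq> {}"
  shows "real k * (2 * real k - real lam) \<le> 2 * real (card (edges E))"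
proof (cases "k = 0")
  case False
  obtain x where "x \<in> V" using assms by auto
  then obtain y where "E x y"
    using False card_nbh[of x] by (metis card.empty ex_in_conv mem_nbh_iff)
  then have "lam \<le> k" by (rule lam_le_degree)
  have "k * k + k * (k - lam) \<le> 2 * card (edges E)"
    using darts_lower_bound[OF \<open>x \<in> V\<close>] card_darts_le_twice_card_edges by (rule order_trans)
  then have "real (k * k + k * (k - lam)) \<le> 2 * real (card (edges E))"
    by (metis of_nat_mono of_nat_mult of_nat_numeral)
  moreover have "real (k * k + k * (k - lam)) = real k * (2 * real k - real lam)"
    using \<open>lam \<le> k\<close> by (simp only: of_nat_add of_nat_mult of_nat_diff) (simp add: algebra_simps)
  ultimately show ?thesis by simp
qed simp

end

locale edge_regular_with_clique = edge_regular_graph +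
  fixes C :: "'a set" and a :: nat
  assumes regular_clique: "regular_clique V E C a"
begin

lemma clique_nonempty: "C \<noteq> {}"
  using regular_clique by (simp add: regular_clique_def is_clique_def)

lemma clique_subset: "C \<subseteq> V"
  using regular_clique by (simp add: regular_clique_def is_clique_def)

lemma clique_adj: "u \<in> C \<Longrightarrow> v \<in> C \<Longrightarrow> u \<noteq> v \<Longrightarrow> E u v"
  using regular_clique by (simp add: regular_clique_def is_clique_def)

lemma card_nbh_inter_clique: "v \<in> V - C \<Longrightarrow> card (nbh v \<inter> C) = a"
  using regular_clique by (simp add: regular_clique_def)

lemma finite_clique: "finite C"
  using clique_subset finite_vertices by (rule finite_subset)

lemma card_clique_pos: "1 \<le> card C"
  using clique_nonempty finite_clique by (simp add: Suc_le_eq card_gt_0_iff)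

lemma nbh_inter_clique: "x \<in> C \<Longrightarrow> nbh x \<inter> C = C - {x}"
  using clique_adj adj_irrefl mem_nbh_iff by auto

lemma card_clique_le_Suc_degree: "card C \<le> k + 1"
proof -
  obtain x where "x \<in> C" using clique_nonempty by auto
  then have "card (C - {x}) \<le> card (nbh x)"
    using nbh_inter_clique[of x] finite_nbh by (metis Int_lower1 card_mono)
  with \<open>x \<in> C\<close> show ?thesis using clique_subset card_nbh by auto
qed

lemma card_clique_le_lam:
  assumes "2 \<le> card C"
  shows "card C \<le> lam + 2"
proof -
  obtain x u where "x \<in> C" "u \<in> C" "x \<noteq> u"
    using assms by (metis card_2_iff' card_le_Suc0_iff_eq finite_clique not_less_eq_eq numeral_2_eq_2)
  then have "C - {x, u} \<subseteq> nbh x \<inter> nbh u"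
    using clique_adj mem_nbh_iff by auto
  then have "card (C - {x, u}) \<le> lam"
    using card_common_nbh[OF clique_adj[OF \<open>x \<in> C\<close> \<open>u \<in> C\<close> \<open>x \<noteq> u\<close>]]
    by (metis card_mono finite_Int finite_nbh)
  with \<open>x \<in> C\<close> \<open>u \<in> C\<close> \<open>x \<noteq> u\<close> show ?thesis
    using finite_clique by (simp add: card_Diff_subset)
qed

lemma card_nbh_minus_clique: "x \<in> C \<Longrightarrow> card (nbh x - C) = k + 1 - card C"
  using card_Diff_subset_Int[of "nbh x" C] finite_clique nbh_inter_clique[of x] card_nbh[of x]
    clique_subset card_clique_pos by auto

lemma nexus_pos:
  assumes "card C \<le> k"
  shows "1 \<le> a"
proof -
  obtain x where "x \<in> C" using clique_nonempty by auto
  then have "card (nbh x - C) \<noteq> 0"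
    using assms card_nbh_minus_clique by simp
  then obtain v where "v \<in> nbh x - C" by (metis card.empty ex_in_conv)
  then have "v \<in> V - C" and "x \<in> nbh v \<inter> C"
    using \<open>x \<in> C\<close> adj_in_vertices adj_sym mem_nbh_iff by auto
  then show ?thesis
    using card_nbh_inter_clique finite_clique
    by (metis One_nat_def Suc_leI card_gt_0_iff empty_iff finite_Int)
qed

lemma nexus_count: "(card C - 1) * (lam + 2 - card C) = (k + 1 - card C) * (a - 1)"
proof -
  obtain x where "x \<in> C" using clique_nonempty by auto
  define A where "A = C - {x}"
  define B where "B = nbh x - C"
  have "finite A" "finite B" unfolding A_def B_def using finite_clique finite_nbh by auto
  have "card A * (lam + 2 - card C) = card B * (a - 1)"
  proof (rule double_counting_const[where R = E, OF \<open>finite A\<close> \<open>finite B\<close>])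
    fix u assume "u \<in> A"
    then have "u \<in> C" "u \<noteq> x" and "E x u" using \<open>x \<in> C\<close> clique_adj unfolding A_def by auto
    have "nbh x \<inter> nbh u = (A - {u}) \<union> {v \<in> B. E u v}"
      unfolding A_def B_def using \<open>x \<in> C\<close> \<open>u \<in> C\<close> clique_adj adj_irrefl adj_sym mem_nbh_iff
      by auto
    moreover have "(A - {u}) \<inter> {v \<in> B. E u v} = {}" unfolding A_def B_def by auto
    ultimately have "lam = card (A - {u}) + card {v \<in> B. E u v}"
      using card_common_nbh[OF \<open>E x u\<close>] \<open>finite A\<close> \<open>finite B\<close> by (simp add: card_Un_disjoint)
    moreover have "card (A - {u}) + 2 = card C"
      using \<open>u \<in> A\<close> \<open>x \<in> C\<close> finite_clique unfolding A_def
      by (metis Suc_1 add_2_eq_Suc' card.remove card_Diff1_less finite_Diff)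
    ultimately show "card {v \<in> B. E u v} = lam + 2 - card C" by simp
  next
    fix v assume "v \<in> B"
    then have "v \<in> V - C" and "E x v" unfolding B_def using adj_in_vertices mem_nbh_iff by auto
    then have "nbh v \<inter> C = insert x {u \<in> A. E u v}"
      unfolding A_def using \<open>x \<in> C\<close> adj_sym mem_nbh_iff by auto
    moreover have "x \<notin> {u \<in> A. E u v}" unfolding A_def by simp
    ultimately have "a = Suc (card {u \<in> A. E u v})"
      using card_nbh_inter_clique[OF \<open>v \<in> V - C\<close>] \<open>finite A\<close> by simp
    then show "card {u \<in> A. E u v} = a - 1" by simp
  qed
  moreover have "card A = card C - 1" unfolding A_def using \<open>x \<in> C\<close> finite_clique by simp
  moreover have "card B = k + 1 - card C" unfolding B_def using \<open>x \<in> C\<close> card_nbh_minus_clique by simp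
  ultimately show ?thesis by simp
qed

lemma nexus_identity:
  "(real k - real (card C) + 1) * (real a - 1) = (real (card C) - 1) * (real lam - real (card C) + 2)"
proof -
  have "real ((k + 1 - card C) * (a - 1)) = (real k - real (card C) + 1) * (real a - 1)"
  proof (cases "card C \<le> k")
    case True
    then show ?thesis using nexus_pos by (simp add: of_nat_diff)
  next
    case False
    then show ?thesis using card_clique_le_Suc_degree by simp
  qed
  moreover have "real ((card C - 1) * (lam + 2 - card C)) =
      (real (card C) - 1) * (real lam - real (card C) + 2)"
  proof (cases "card C = 1")
    case False
    then show ?thesis using card_clique_pos card_clique_le_lam by (simp add: of_nat_diff)
  qed simp
  ultimately show ?thesis using nexus_count by metis
qed

end

theorem proposition3p8:
  fixes V :: "'a set" and E :: "'a \<Rightarrow> 'a \<Rightarrow> bool"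
    and n k lam a c :: nat
  assumes "neumaier_graph V E n k lam a c"
  shows "real (card (edges E)) \<ge>
           real k * (real k - real lam)
         + (real k - real c + 1) * (real a - 1)
         + (real k - real c + 1) * (real lam - real a + 1) / 2
         + (real c - 1) * (real c - 2) / 2"
proof -
  from assms obtain C where "edge_regular V E n k lam" "regular_clique V E C a" "card C = c"
    unfolding neumaier_graph_def by auto
  then interpret edge_regular_with_clique V E n k lam C a
    by (simp add: edge_regular_with_clique_def edge_regular_graph_def
        edge_regular_with_clique_axioms_def)
  have "V \<noteq> {}" using clique_nonempty clique_subset by auto
  then have "real k * (2 * real k - real lam) \<le> 2 * real (card (edges E))"
    by (rule twice_card_edges_ge)
  moreover have "(real k - real c + 1) * (real a - 1) = (real c - 1) * (real lam - real c + 2)"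
    using nexus_identity \<open>card C = c\<close> by simp
  then have "real k * (real k - real lam)
         + (real k - real c + 1) * (real a - 1)
         + (real k - real c + 1) * (real lam - real a + 1) / 2
         + (real c - 1) * (real c - 2) / 2 = real k * (2 * real k - real lam) / 2"
    by (simp add: field_simps)
  ultimately show ?thesis by simp
qed

end
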